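(* Consider a mean-variance team stochastic game as described in the context and let $\tilde{\boldsymbol{\mu}}\in\mathcal{U}$ be a first-order stationary point. For $\mu_i\in\mathcal{U}_i$ write $\delta_{\tilde\mu_i}^{\mu_i}=(1-\delta)\tilde\mu_i+\delta\mu_i$ and $D_i(\mu_i)=\frac{\mathrm{d}}{\mathrm{d}\delta}J(\delta_{\tilde\mu_i}^{\mu_i},\tilde{\boldsymbol{\mu}}_{-i})\big|_{\delta=0}$. (1) If $D_i(\mu_i)<0$ for every agent $i\in\mathcal{N}$ and every $\mu_i\in\mathcal{U}_i$ with $\mu_i\neq\tilde\mu_i$, then $\tilde{\boldsymbol{\mu}}$ is a strict local Nash equilibrium. (2) If there exist agents $i$ and policies $\mu_i'\in\mathcal{U}_i$ with $D_i(\mu'_i)=0$, then $\tilde{\boldsymbol{\mu}}$ is a local Nash equilibrium if and only if for every such agent $i$ and such $\mu_i'$ there exists $\bar\delta\in(0,1]$ such that for all $\delta\in(0,\bar\delta]$, $\eta(\delta_{\tilde\mu_i}^{\mu_i'},\tilde{\boldsymbol{\mu}}_{-i})=\eta(\tilde\mu_i,\tilde{\boldsymbol{\mu}}_{-i})$.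
   Context: Game: finite agents $\mathcal{N}=\{1,\dots,N\}$, finite state space $\mathcal{S}$, finite action sets $\mathcal{A}_i$, $\mathcal{A}=\prod_i\mathcal{A}_i$, transition kernel $P(s'|s,\boldsymbol{a})$, common reward $r:\mathcal{S}\times\mathcal{A}\to\mathbb{R}$. Policies $\mu_i:\mathcal{S}\to\Delta(\mathcal{A}_i)$ (set $\mathcal{U}_i$); joint policies $\boldsymbol{\mu}\in\mathcal{U}=\prod_i\mathcal{U}_i$ with $\boldsymbol{\mu}(\boldsymbol{a}|s)=\prod_i\mu_i(a_i|s)$; $(\mu_i,\boldsymbol{\mu}_{-i})$ means agent $i$ uses $\mu_i$, others use $\boldsymbol{\mu}_{-i}$; $(1-\delta)\tilde\mu_i+\delta\mu_i$ is the policy $s\mapsto(1-\delta)\tilde\mu_i(\cdot|s)+\delta\mu_i(\cdot|s)$. Standing assumption: the chain $P^{\boldsymbol{\mu}}(s'|s)=\sum_{\boldsymbol{a}}\boldsymbol{\mu}(\boldsymbol{a}|s)P(s'|s,\boldsymbol{a})$ is ergodic for every $\boldsymbol{\mu}\in\mathcal{U}$, with stationary distribution $\pi^{\boldsymbol{\mu}}$. $\eta(\boldsymbol{\mu})=\eta^{\boldsymbol{\mu}}=\sum_s\pi^{\boldsymbol{\mu}}(s)\sum_{\boldsymbol{a}}\boldsymbol{\mu}(\boldsymbol{a}|s)r(s,\boldsymbol{a})$ (long-run average reward); $\zeta^{\boldsymbol{\mu}}=\sum_s\pi^{\boldsymbol{\mu}}(s)\sum_{\boldsymbol{a}}\boldsymbol{\mu}(\boldsymbol{a}|s)(r(s,\boldsymbol{a})-\eta^{\boldsymbol{\mu}})^2$;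 for fixed $\beta\ge0$, $J(\boldsymbol{\mu})=\eta^{\boldsymbol{\mu}}-\beta\zeta^{\boldsymbol{\mu}}$. Derivatives at $\delta=0$ are right derivatives. A joint policy $\tilde{\boldsymbol{\mu}}$ is a first-order stationary point if $\frac{\mathrm{d}}{\mathrm{d}\delta}J((1-\delta)\tilde\mu_i+\delta\mu_i,\tilde{\boldsymbol{\mu}}_{-i})|_{\delta=0}\le0$ for all $i\in\mathcal{N}$, $\mu_i\in\mathcal{U}_i$. A joint policy $\boldsymbol{\mu}^*$ is a local Nash equilibrium if there is $\bar\delta\in(0,1]$ such that for all $\delta\in(0,\bar\delta]$, all $i\in\mathcal{N}$ and all $\mu_i\in\mathcal{U}_i$: $J(\mu_i^*,\boldsymbol{\mu}^*_{-i})\ge J((1-\delta)\mu_i^*+\delta\mu_i,\boldsymbol{\mu}^*_{-i})$; it is a strict local Nash equilibrium if the inequality is strict for all $\mu_i\neq\mu_i^*$. *)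

theory Defs
  imports "HOL-Analysis.Analysis"
begin

text \<open>Agents: finite type 'i; states: finite type 's; actions of agent i: the nonempty set A i
  of the finite type 'a.
  P s a s' is the transition probability, r s a the common reward.\<close>

definition joint_acts :: "('i \<Rightarrow> 'a set) \<Rightarrow> ('i \<Rightarrow> 'a) set" where
  "joint_acts A = Pi\<^sub>E UNIV A"

definition is_policy :: "'a set \<Rightarrow> ('s \<Rightarrow> 'a \<Rightarrow> real) \<Rightarrow> bool" where
  "is_policy Ai m \<longleftrightarrow> (\<forall>s. (\<forall>a. 0 \<le> m s a) \<and> (\<forall>a. a \<notin> Ai \<longrightarrow> m s a = 0)
                            \<and> (\<Sum>a\<in>Ai. m s a) = 1)"

definition is_joint_policy :: "('i \<Rightarrow> 'a set) \<Rightarrow> ('i \<Rightarrow> 's \<Rightarrow> 'a \<Rightarrow> real) \<Rightarrow> bool" where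
  "is_joint_policy A mu \<longleftrightarrow> (\<forall>i. is_policy (A i) (mu i))"

definition jprob :: "('i::finite \<Rightarrow> 's \<Rightarrow> 'a \<Rightarrow> real) \<Rightarrow> 's \<Rightarrow> ('i \<Rightarrow> 'a) \<Rightarrow> real" where
  "jprob mu s a = (\<Prod>i\<in>UNIV. mu i s (a i))"

definition mixp :: "real \<Rightarrow> ('s \<Rightarrow> 'a \<Rightarrow> real) \<Rightarrow> ('s \<Rightarrow> 'a \<Rightarrow> real) \<Rightarrow> 's \<Rightarrow> 'a \<Rightarrow> real" where
  "mixp d m1 m2 = (\<lambda>s a. (1 - d) * m1 s a + d * m2 s a)"

definition chain :: "('i::finite \<Rightarrow> 'a set) \<Rightarrow> ('s \<Rightarrow> ('i \<Rightarrow> 'a) \<Rightarrow> 's \<Rightarrow> real)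
     \<Rightarrow> ('i \<Rightarrow> 's \<Rightarrow> 'a \<Rightarrow> real) \<Rightarrow> 's \<Rightarrow> 's \<Rightarrow> real" where
  "chain A P mu s s' = (\<Sum>a\<in>joint_acts A. jprob mu s a * P s a s')"

fun nstep :: "('s::finite \<Rightarrow> 's \<Rightarrow> real) \<Rightarrow> nat \<Rightarrow> 's \<Rightarrow> 's \<Rightarrow> real" where
  "nstep Q 0 s s' = (if s = s' then 1 else 0)"
| "nstep Q (Suc n) s s' = (\<Sum>t\<in>UNIV. nstep Q n s t * Q t s')"

text \<open>Ergodic finite chain: irreducible and aperiodic, i.e. some power has all entries positive.\<close>
definition ergodic :: "('s::finite \<Rightarrow> 's \<Rightarrow> real) \<Rightarrow> bool" where
  "ergodic Q \<longleftrightarrow> (\<exists>n. \<forall>s s'. 0 < nstep Q n s s')"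

definition is_stationary_dist :: "('s::finite \<Rightarrow> 's \<Rightarrow> real) \<Rightarrow> ('s \<Rightarrow> real) \<Rightarrow> bool" where
  "is_stationary_dist Q p \<longleftrightarrow> (\<forall>s. 0 \<le> p s) \<and> (\<Sum>s\<in>UNIV. p s) = 1
      \<and> (\<forall>s'. (\<Sum>s\<in>UNIV. p s * Q s s') = p s')"

text \<open>The stationary distribution pi^mu (unique under ergodicity).\<close>
definition stat_dist :: "('i::finite \<Rightarrow> 'a set) \<Rightarrow> ('s::finite \<Rightarrow> ('i \<Rightarrow> 'a) \<Rightarrow> 's \<Rightarrow> real)
     \<Rightarrow> ('i \<Rightarrow> 's \<Rightarrow> 'a \<Rightarrow> real) \<Rightarrow> 's \<Rightarrow> real" where
  "stat_dist A P mu = (THE p. is_stationary_dist (chain A P mu) p)"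

definition eta :: "('i::finite \<Rightarrow> 'a set) \<Rightarrow> ('s::finite \<Rightarrow> ('i \<Rightarrow> 'a) \<Rightarrow> 's \<Rightarrow> real)
     \<Rightarrow> ('s \<Rightarrow> ('i \<Rightarrow> 'a) \<Rightarrow> real) \<Rightarrow> ('i \<Rightarrow> 's \<Rightarrow> 'a \<Rightarrow> real) \<Rightarrow> real" where
  "eta A P r mu = (\<Sum>s\<in>UNIV. stat_dist A P mu s * (\<Sum>a\<in>joint_acts A. jprob mu s a * r s a))"

definition zeta :: "('i::finite \<Rightarrow> 'a set) \<Rightarrow> ('s::finite \<Rightarrow> ('i \<Rightarrow> 'a) \<Rightarrow> 's \<Rightarrow> real)
     \<Rightarrow> ('s \<Rightarrow> ('i \<Rightarrow> 'a) \<Rightarrow> real) \<Rightarrow> ('i \<Rightarrow> 's \<Rightarrow> 'a \<Rightarrow> real) \<Rightarrow> real" where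
  "zeta A P r mu = (\<Sum>s\<in>UNIV. stat_dist A P mu s *
      (\<Sum>a\<in>joint_acts A. jprob mu s a * (r s a - eta A P r mu)\<^sup>2))"

definition MVJ :: "('i::finite \<Rightarrow> 'a set) \<Rightarrow> ('s::finite \<Rightarrow> ('i \<Rightarrow> 'a) \<Rightarrow> 's \<Rightarrow> real)
     \<Rightarrow> ('s \<Rightarrow> ('i \<Rightarrow> 'a) \<Rightarrow> real) \<Rightarrow> real \<Rightarrow> ('i \<Rightarrow> 's \<Rightarrow> 'a \<Rightarrow> real) \<Rightarrow> real" where
  "MVJ A P r \<beta> mu = eta A P r mu - \<beta> * zeta A P r mu"

definition rderiv0 :: "(real \<Rightarrow> real) \<Rightarrow> real" where
  "rderiv0 f = Lim (at_right 0) (\<lambda>d. (f d - f 0) / d)"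

definition Dir :: "('i::finite \<Rightarrow> 'a set) \<Rightarrow> ('s::finite \<Rightarrow> ('i \<Rightarrow> 'a) \<Rightarrow> 's \<Rightarrow> real)
     \<Rightarrow> ('s \<Rightarrow> ('i \<Rightarrow> 'a) \<Rightarrow> real) \<Rightarrow> real \<Rightarrow> ('i \<Rightarrow> 's \<Rightarrow> 'a \<Rightarrow> real)
     \<Rightarrow> 'i \<Rightarrow> ('s \<Rightarrow> 'a \<Rightarrow> real) \<Rightarrow> real" where
  "Dir A P r \<beta> mu i m = rderiv0 (\<lambda>d. MVJ A P r \<beta> (mu(i := mixp d (mu i) m)))"

definition first_order_stationary where
  "first_order_stationary A P r \<beta> mu \<longleftrightarrow>
     (\<forall>i m. is_policy (A i) m \<longrightarrow> Dir A P r \<beta> mu i m \<le> 0)"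

definition local_NE where
  "local_NE A P r \<beta> mu \<longleftrightarrow>
     (\<exists>db. 0 < db \<and> db \<le> 1 \<and> (\<forall>d. 0 < d \<and> d \<le> db \<longrightarrow> (\<forall>i m. is_policy (A i) m \<longrightarrow>
        MVJ A P r \<beta> mu \<ge> MVJ A P r \<beta> (mu(i := mixp d (mu i) m)))))"

definition strict_local_NE where
  "strict_local_NE A P r \<beta> mu \<longleftrightarrow>
     (\<exists>db. 0 < db \<and> db \<le> 1 \<and> (\<forall>d. 0 < d \<and> d \<le> db \<longrightarrow> (\<forall>i m. is_policy (A i) m \<longrightarrow>
        MVJ A P r \<beta> mu \<ge> MVJ A P r \<beta> (mu(i := mixp d (mu i) m))
        \<and> (m \<noteq> mu i \<longrightarrow> MVJ A P r \<beta> mu > MVJ A P r \<beta> (mu(i := mixp d (mu i) m))))))"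

end

(* Fix the stationary point mu and an agent i, and let nu_d = mu(i := (1 - d) mu_i + d m).  The
   performance difference formula of average-reward chains, with the bias of mu solving a Poisson
   equation, gives

     J(nu_d) - J(mu) = d X_d + beta (d Y_d)^2,

   where X_d and Y_d are averages under the stationary distribution of nu_d of the advantages of m
   over mu for the pseudo reward r - beta (r - eta(mu))^2 and for r.  In particular D_i(m) = X_0.

   The advantages at a state s depend linearly on m(s, .) alone, so they are convex combinations of
   the advantages of the pure deviations "play k at state s", which first-order stationarity makes
   nonpositive.  If every pure deviation with zero pseudo-reward advantage also has zero reward
   advantage, finitely many ratios give |Y_d| <= K |X_d| uniformly in m, so the first-order decrease
   d X_d dominates beta (d Y_d)^2 for all d below a threshold independent of m.  Both the hypothesis
   of (1) and the right-hand side of (2) yield this condition.  Conversely, at a local Nash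
   equilibrium a direction with D_i(m) = 0 has X_d = 0, so J(nu_d) - J(mu) = beta (eta(nu_d) -
   eta(mu))^2 <= 0 forces eta(nu_d) = eta(mu). *)

theory Submission
  imports Defs
begin

lemma sum_product_assoc:
  fixes p :: "'s \<Rightarrow> real" and Q :: "'s \<Rightarrow> 't \<Rightarrow> real"
  assumes "finite S" "finite T"
  shows "(\<Sum>s\<in>S. p s * (\<Sum>t\<in>T. Q s t * h t)) = (\<Sum>t\<in>T. (\<Sum>s\<in>S. p s * Q s t) * h t)"
  by (simp add: sum_distrib_left sum_distrib_right mult.assoc) (rule sum.swap)

lemma eventually_at_right_0_iff:
  "eventually R (at_right (0::real)) \<longleftrightarrow> (\<exists>db. 0 < db \<and> db \<le> 1 \<and> (\<forall>d. 0 < d \<and> d \<le> db \<longrightarrow> R d))"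
proof
  assume "eventually R (at_right 0)"
  then obtain b where "0 < b" "\<forall>d>0. d < b \<longrightarrow> R d" by (auto simp: eventually_at_right_field)
  then show "\<exists>db. 0 < db \<and> db \<le> 1 \<and> (\<forall>d. 0 < d \<and> d \<le> db \<longrightarrow> R d)"
    by (intro exI[of _ "min 1 (b / 2)"]) auto
next
  assume "\<exists>db. 0 < db \<and> db \<le> 1 \<and> (\<forall>d. 0 < d \<and> d \<le> db \<longrightarrow> R d)"
  then obtain db where "0 < db" "\<forall>d. 0 < d \<and> d \<le> db \<longrightarrow> R d" by blast
  then show "eventually R (at_right 0)"
    unfolding eventually_at_right_field by (intro exI[of _ db]) auto
qed

lemma finite_ratio_bound:
  fixes f g :: "'a \<Rightarrow> real"
  assumes "finite S" "\<forall>x\<in>S. 0 \<le> g x" "\<forall>x\<in>S. g x = 0 \<longrightarrow> f x = 0"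
  shows "\<exists>K\<ge>0. \<forall>x\<in>S. \<bar>f x\<bar> \<le> K * g x"
proof (intro exI conjI ballI)
  let ?K = "\<Sum>x\<in>S. \<bar>f x\<bar> / g x"
  show "0 \<le> ?K" using assms by (auto intro: sum_nonneg)
  fix x assume x: "x \<in> S"
  show "\<bar>f x\<bar> \<le> ?K * g x"
  proof (cases "g x = 0")
    case False
    with assms x have "0 < g x" by (simp add: less_le)
    moreover have "\<bar>f x\<bar> / g x \<le> ?K" using assms x by (intro member_le_sum) auto
    ultimately show ?thesis by (simp add: divide_le_eq)
  qed (use assms x in simp)
qed

lemma weighted_sum_abs_le:
  fixes w f g :: "'a \<Rightarrow> real"
  assumes "\<forall>x\<in>S. 0 \<le> w x" "\<forall>x\<in>S. \<bar>f x\<bar> \<le> K * g x"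
  shows "\<bar>\<Sum>x\<in>S. w x * f x\<bar> \<le> K * (\<Sum>x\<in>S. w x * g x)"
proof -
  have "\<bar>\<Sum>x\<in>S. w x * f x\<bar> \<le> (\<Sum>x\<in>S. w x * \<bar>f x\<bar>)"
    using sum_abs[of "\<lambda>x. w x * f x" S] assms(1) by (simp add: abs_mult)
  also have "\<dots> \<le> (\<Sum>x\<in>S. w x * (K * g x))"
    using assms by (intro sum_mono mult_left_mono) auto
  finally show ?thesis by (simp add: sum_distrib_left mult.left_commute)
qed

lemma weighted_sum_le_bound:
  fixes w g :: "'a \<Rightarrow> real"
  assumes "\<forall>x\<in>S. 0 \<le> w x" "sum w S = 1" "\<forall>x\<in>S. g x \<le> M"
  shows "(\<Sum>x\<in>S. w x * g x) \<le> M"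
proof -
  have "(\<Sum>x\<in>S. w x * g x) \<le> (\<Sum>x\<in>S. w x * M)"
    using assms by (intro sum_mono mult_left_mono) auto
  with assms(2) show ?thesis by (simp add: sum_distrib_right[symmetric])
qed

lemma quadratic_perturbation_nonpos:
  fixes d X Y K M \<beta> :: real
  assumes "0 < d" "0 \<le> \<beta>" "0 \<le> X" "X \<le> M" "\<bar>Y\<bar> \<le> K * X" "d * \<beta> * K\<^sup>2 * M < 1"
  shows "- (d * X) + \<beta> * (d * Y)\<^sup>2 \<le> 0" and "0 < X \<Longrightarrow> - (d * X) + \<beta> * (d * Y)\<^sup>2 < 0"
proof -
  have "Y\<^sup>2 \<le> (K * X)\<^sup>2"
    using assms(5) by (metis abs_ge_zero abs_le_square_iff abs_of_nonneg order_trans)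
  then have "\<beta> * d\<^sup>2 * Y\<^sup>2 \<le> \<beta> * d\<^sup>2 * (K * X)\<^sup>2"
    using assms(2) by (intro mult_left_mono) auto
  then have "\<beta> * (d * Y)\<^sup>2 \<le> (d * X) * (d * \<beta> * K\<^sup>2 * X)"
    by (simp add: power2_eq_square algebra_simps)
  also have "\<dots> \<le> (d * X) * (d * \<beta> * K\<^sup>2 * M)"
    using assms(1-4) by (intro mult_left_mono) auto
  finally have le: "\<beta> * (d * Y)\<^sup>2 \<le> (d * X) * (d * \<beta> * K\<^sup>2 * M)" .
  have "(d * X) * (d * \<beta> * K\<^sup>2 * M) \<le> d * X"
    using assms(1,3,6) by (intro mult_left_le) auto
  with le show "- (d * X) + \<beta> * (d * Y)\<^sup>2 \<le> 0" by linarith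
  assume "0 < X"
  then have "(d * X) * (d * \<beta> * K\<^sup>2 * M) < d * X"
    using assms(1,6) by (simp add: mult_less_cancel_left2 not_le)
  with le show "- (d * X) + \<beta> * (d * Y)\<^sup>2 < 0" by linarith
qed

section \<open>Finite Markov chains\<close>

definition stochastic :: "('s::finite \<Rightarrow> 's \<Rightarrow> real) \<Rightarrow> bool" where
  "stochastic Q \<longleftrightarrow> (\<forall>s t. 0 \<le> Q s t) \<and> (\<forall>s. (\<Sum>t\<in>UNIV. Q s t) = 1)"

lemma nstep_row_sum:
  assumes "stochastic Q"
  shows "(\<Sum>t\<in>UNIV. nstep Q n s t) = 1"
proof (induction n)
  case 0
  show ?case by simp
next
  case (Suc n)
  have "(\<Sum>t\<in>UNIV. nstep Q (Suc n) s t) = (\<Sum>u\<in>UNIV. nstep Q n s u * (\<Sum>t\<in>UNIV. Q u t))"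
    using sum_product_assoc[of UNIV UNIV "nstep Q n s" Q "\<lambda>_. 1"] by simp
  with Suc assms show ?case by (simp add: stochastic_def)
qed

lemma left_invariant_nstep:
  assumes "\<forall>t. (\<Sum>s\<in>UNIV. p s * Q s t) = p t"
  shows "(\<Sum>s\<in>UNIV. p s * nstep Q n s t) = p t"
proof (induction n arbitrary: t)
  case 0
  show ?case by (simp add: if_distrib cong: if_cong)
next
  case (Suc n)
  have "(\<Sum>s\<in>UNIV. p s * nstep Q (Suc n) s t) = (\<Sum>u\<in>UNIV. (\<Sum>s\<in>UNIV. p s * nstep Q n s u) * Q u t)"
    by (simp add: sum_product_assoc)
  with Suc assms show ?case by simp
qed

lemma right_invariant_nstep:
  assumes "\<forall>s. (\<Sum>t\<in>UNIV. Q s t * h t) = h s"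
  shows "(\<Sum>t\<in>UNIV. nstep Q n s t * h t) = h s"
proof (induction n arbitrary: s)
  case 0
  have "(\<Sum>t\<in>UNIV. (if s = t then 1 else 0) * h t) = (\<Sum>t\<in>UNIV. if s = t then h t else 0)"
    by (rule sum.cong) auto
  then show ?case by simp
next
  case (Suc n)
  have "(\<Sum>t\<in>UNIV. nstep Q (Suc n) s t * h t) = (\<Sum>u\<in>UNIV. nstep Q n s u * (\<Sum>t\<in>UNIV. Q u t * h t))"
    by (simp add: sum_product_assoc)
  with Suc assms show ?case by simp
qed

lemma stationary_expectation:
  assumes "is_stationary_dist Q p"
  shows "(\<Sum>s\<in>UNIV. p s * (\<Sum>t\<in>UNIV. Q s t * h t)) = (\<Sum>t\<in>UNIV. p t * h t)"
  using assms by (simp add: sum_product_assoc is_stationary_dist_def)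

lemma stationary_dist_pos:
  assumes "ergodic Q" "is_stationary_dist Q p"
  shows "0 < p t"
proof -
  obtain n where n: "\<forall>s s'. 0 < nstep Q n s s'" using assms(1) by (auto simp: ergodic_def)
  have p: "\<forall>s. 0 \<le> p s" "sum p UNIV = 1" "\<forall>t. (\<Sum>s\<in>UNIV. p s * Q s t) = p t"
    using assms(2) by (auto simp: is_stationary_dist_def)
  have "\<exists>s. 0 < p s"
  proof (rule ccontr)
    assume "\<not> (\<exists>s. 0 < p s)"
    then have "\<forall>s. p s = 0" using p(1) by (meson not_less order_antisym)
    then show False using p(2) by simp
  qed
  then obtain s where s: "0 < p s" by blast
  have "0 < (\<Sum>s\<in>UNIV. p s * nstep Q n s t)"
    by (rule sum_pos2[of UNIV s]) (use s n p(1) in \<open>auto intro: mult_nonneg_nonneg less_imp_le\<close>)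
  then show ?thesis using left_invariant_nstep[OF p(3)] by simp
qed

text \<open>Uniqueness and the maximum principle both compare with an extremal state, using that some
  power of the chain has only positive entries.\<close>

lemma stationary_dist_unique:
  assumes "ergodic Q" "is_stationary_dist Q p" "is_stationary_dist Q q"
  shows "p = q"
proof -
  obtain n where n: "\<forall>s s'. 0 < nstep Q n s s'" using assms(1) by (auto simp: ergodic_def)
  have pos: "\<And>t. 0 < p t" "\<And>t. 0 < q t" using stationary_dist_pos assms by blast+
  define c where "c = Min (range (\<lambda>s. p s / q s))"
  have "c \<in> range (\<lambda>s. p s / q s)" unfolding c_def by (rule Min_in) auto
  then obtain t0 where t0: "c = p t0 / q t0" by auto
  have c_le: "c \<le> p s / q s" for s unfolding c_def by (rule Min_le) auto
  have x_nonneg: "0 \<le> p s - c * q s" for s using c_le[of s] pos[of s] by (simp add: pos_le_divide_eq)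
  have "\<forall>t. (\<Sum>s\<in>UNIV. (p s - c * q s) * Q s t) = p t - c * q t"
    using assms(2,3)
    by (simp add: is_stationary_dist_def left_diff_distrib sum_subtractf mult.assoc sum_distrib_left[symmetric])
  from left_invariant_nstep[OF this, of n t0]
  have "(\<Sum>s\<in>UNIV. (p s - c * q s) * nstep Q n s t0) = 0" using t0 pos[of t0] by simp
  then have "\<forall>s. (p s - c * q s) * nstep Q n s t0 = 0"
    using x_nonneg n by (simp add: sum_nonneg_eq_0_iff less_imp_le)
  then have "p s = c * q s" for s using n by (metis less_irrefl mult_eq_0_iff right_minus_eq)
  then have "p = (\<lambda>s. c * q s)" by blast
  moreover have "sum p UNIV = 1" "sum q UNIV = 1"
    using assms(2,3) by (auto simp: is_stationary_dist_def)
  ultimately show ?thesis by (simp add: sum_distrib_left[symmetric])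
qed

lemma harmonic_constant:
  assumes "stochastic Q" "ergodic Q" "\<forall>s. (\<Sum>t\<in>UNIV. Q s t * h t) = h s"
  shows "h t = h s"
proof -
  obtain n where n: "\<forall>s s'. 0 < nstep Q n s s'" using assms(2) by (auto simp: ergodic_def)
  have "Max (range h) \<in> range h" by (rule Max_in) auto
  then obtain s0 where s0: "h s0 = Max (range h)" by (metis imageE)
  have le: "h u \<le> h s0" for u using s0 by simp
  have "(\<Sum>u\<in>UNIV. nstep Q n s0 u * (h s0 - h u))
      = h s0 * (\<Sum>u\<in>UNIV. nstep Q n s0 u) - (\<Sum>u\<in>UNIV. nstep Q n s0 u * h u)"
    by (simp add: right_diff_distrib sum_subtractf sum_distrib_left mult.commute)
  also have "\<dots> = 0" using nstep_row_sum[OF assms(1)] right_invariant_nstep[OF assms(3)] by simp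
  finally have "\<forall>u. nstep Q n s0 u * (h s0 - h u) = 0"
    using n le by (simp add: sum_nonneg_eq_0_iff less_imp_le)
  then have "\<forall>u. h u = h s0" using n by (metis less_irrefl mult_eq_0_iff right_minus_eq)
  then show ?thesis by metis
qed

text \<open>Brouwer's fixed point theorem for \<open>x \<mapsto> x Q\<close> on the probability simplex.\<close>

lemma stationary_dist_exists:
  fixes Q :: "'s::finite \<Rightarrow> 's \<Rightarrow> real"
  assumes "stochastic Q"
  shows "\<exists>p. is_stationary_dist Q p"
proof -
  define S where "S = {x::real^'s. (\<forall>i. 0 \<le> x$i) \<and> (\<Sum>i\<in>UNIV. x$i) = 1}"
  define f where "f x = (\<chi> t. \<Sum>s\<in>UNIV. x$s * Q s t)" for x :: "real^'s"
  have "closed S" unfolding S_def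
    by (intro closed_Collect_conj closed_Collect_all closed_Collect_le closed_Collect_eq continuous_intros)
  moreover have "bounded S"
  proof -
    have "norm x \<le> 1" if "x \<in> S" for x
      using norm_le_l1_cart[of x] that by (simp add: S_def)
    then show ?thesis unfolding bounded_iff by blast
  qed
  ultimately have "compact S" by (simp add: compact_eq_bounded_closed)
  moreover have "convex S"
  proof (rule convexI)
    fix x y :: "real^'s" and u v :: real
    assume xy: "x \<in> S" "y \<in> S" "0 \<le> u" "0 \<le> v" "u + v = 1"
    have "(\<Sum>i\<in>UNIV. (u *\<^sub>R x + v *\<^sub>R y) $ i) = u * (\<Sum>i\<in>UNIV. x$i) + v * (\<Sum>i\<in>UNIV. y$i)"
      by (simp add: sum.distrib sum_distrib_left)
    then show "u *\<^sub>R x + v *\<^sub>R y \<in> S" using xy by (simp add: S_def)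
  qed
  moreover have "(\<chi> i. 1 / real CARD('s)) \<in> S" by (simp add: S_def)
  then have "S \<noteq> {}" by blast
  moreover have "continuous_on S f" unfolding f_def by (intro continuous_intros)
  moreover have "f \<in> S \<rightarrow> S"
  proof
    fix x assume x: "x \<in> S"
    have "(\<Sum>t\<in>UNIV. f x $ t) = (\<Sum>s\<in>UNIV. x$s * (\<Sum>t\<in>UNIV. Q s t))"
      using sum_product_assoc[of UNIV UNIV "\<lambda>s. x$s" Q "\<lambda>_. 1"] by (simp add: f_def)
    moreover have "0 \<le> f x $ t" for t
      using x assms by (auto simp: S_def f_def stochastic_def intro!: sum_nonneg)
    ultimately show "f x \<in> S" using x assms by (simp add: S_def stochastic_def)
  qed
  ultimately obtain x where x: "x \<in> S" "f x = x" using brouwer by blast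
  have "is_stationary_dist Q (\<lambda>s. x$s)"
    unfolding is_stationary_dist_def
  proof (intro conjI allI)
    fix s' show "(\<Sum>s\<in>UNIV. x$s * Q s s') = x$s'"
      using x(2) by (metis f_def vec_lambda_beta)
  qed (use x(1) in \<open>auto simp: S_def\<close>)
  then show ?thesis by blast
qed

definition poisson_op :: "('s::finite \<Rightarrow> 's \<Rightarrow> real) \<Rightarrow> ('s \<Rightarrow> real) \<Rightarrow> real^'s \<Rightarrow> real^'s" where
  "poisson_op Q p v = (\<chi> s. v$s - (\<Sum>t\<in>UNIV. Q s t * v$t) + (\<Sum>t\<in>UNIV. p t * v$t))"

lemma linear_poisson_op: "linear (poisson_op Q p)"
proof (rule linearI)
  show "poisson_op Q p (a + b) = poisson_op Q p a + poisson_op Q p b" for a b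
    by (simp add: poisson_op_def vec_eq_iff distrib_left sum.distrib)
  show "poisson_op Q p (c *\<^sub>R b) = c *\<^sub>R poisson_op Q p b" for c b
    by (simp add: poisson_op_def vec_eq_iff sum_distrib_left algebra_simps)
qed

lemma stationary_expectation_poisson_op:
  assumes p: "is_stationary_dist Q p"
  shows "(\<Sum>s\<in>UNIV. p s * poisson_op Q p v $ s) = (\<Sum>t\<in>UNIV. p t * v$t)"
proof -
  have "(\<Sum>s\<in>UNIV. p s * poisson_op Q p v $ s) = (\<Sum>s\<in>UNIV. p s * v$s)
      - (\<Sum>s\<in>UNIV. p s * (\<Sum>t\<in>UNIV. Q s t * v$t)) + sum p UNIV * (\<Sum>t\<in>UNIV. p t * v$t)"
    by (simp add: poisson_op_def distrib_left right_diff_distrib sum.distrib sum_subtractf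
        sum_distrib_right)
  then show ?thesis
    using stationary_expectation[OF p, of "\<lambda>t. v$t"] p by (simp add: is_stationary_dist_def)
qed

text \<open>The mean \<open>\<langle>p, v\<rangle>\<close> of a kernel element vanishes, so \<open>v\<close> is harmonic, hence constant by
  the maximum principle, hence zero.\<close>

lemma inj_poisson_op:
  assumes Q: "stochastic Q" "ergodic Q" and p: "is_stationary_dist Q p"
  shows "inj (poisson_op Q p)"
  unfolding linear_injective_0[OF linear_poisson_op]
proof (intro allI impI)
  fix v assume L0: "poisson_op Q p v = 0"
  define c where "c = (\<Sum>t\<in>UNIV. p t * v$t)"
  have c0: "c = 0" using stationary_expectation_poisson_op[OF p, of v] L0 by (simp add: c_def)
  have eq: "v$s - (\<Sum>t\<in>UNIV. Q s t * v$t) + c = 0" for s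
    using L0 by (simp add: poisson_op_def vec_eq_iff c_def)
  have "\<forall>s. (\<Sum>t\<in>UNIV. Q s t * v$t) = v$s"
  proof
    fix s show "(\<Sum>t\<in>UNIV. Q s t * v$t) = v$s" using eq[of s] c0 by linarith
  qed
  from harmonic_constant[OF Q this] have const: "v$t = v$s" for s t .
  have "c = (\<Sum>t\<in>UNIV. p t * v$s)" for s
    unfolding c_def by (rule sum.cong) (use const in auto)
  then have "v$s = 0" for s using c0 p by (simp add: is_stationary_dist_def sum_distrib_right[symmetric])
  then show "v = 0" by (simp add: vec_eq_iff)
qed

lemma poisson_equation_solvable:
  fixes Q :: "'s::finite \<Rightarrow> 's \<Rightarrow> real"
  assumes Q: "stochastic Q" "ergodic Q" and p: "is_stationary_dist Q p"
  shows "\<exists>g. \<forall>s. g s - (\<Sum>t\<in>UNIV. Q s t * g t) = y s - (\<Sum>t\<in>UNIV. p t * y t)"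
proof -
  have "surj (poisson_op Q p)"
    by (rule linear_injective_imp_surjective[OF linear_poisson_op inj_poisson_op[OF Q p]]) simp
  then obtain v where v: "poisson_op Q p v = (\<chi> s. y s)" by (metis surjD)
  have avg: "(\<Sum>t\<in>UNIV. p t * v$t) = (\<Sum>t\<in>UNIV. p t * y t)"
    using stationary_expectation_poisson_op[OF p, of v] v by simp
  have "v$s - (\<Sum>t\<in>UNIV. Q s t * v$t) + (\<Sum>t\<in>UNIV. p t * v$t) = y s" for s
    using v by (simp add: poisson_op_def vec_eq_iff)
  then have "v$s - (\<Sum>t\<in>UNIV. Q s t * v$t) = y s - (\<Sum>t\<in>UNIV. p t * y t)" for s
    unfolding avg by (simp add: eq_diff_eq)
  then show ?thesis by blast
qed

section \<open>Policies\<close>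

abbreviation pure_policy :: "'a \<Rightarrow> 's \<Rightarrow> 'a \<Rightarrow> real" where
  "pure_policy k \<equiv> \<lambda>_. indicator {k}"

lemma mixp_0 [simp]: "mixp 0 m1 m2 = m1"
  by (simp add: mixp_def)

lemma policy_mixp:
  assumes "is_policy Ai m1" "is_policy Ai m2" "0 \<le> d" "d \<le> 1"
  shows "is_policy Ai (mixp d m1 m2)"
proof -
  have "(\<Sum>a\<in>Ai. (1 - d) * m1 s a + d * m2 s a) = (1 - d) * (\<Sum>a\<in>Ai. m1 s a) + d * (\<Sum>a\<in>Ai. m2 s a)" for s
    by (simp add: sum.distrib sum_distrib_left)
  with assms show ?thesis unfolding is_policy_def mixp_def by auto
qed

lemma policy_upd_pure:
  fixes Ai :: "'a::finite set"
  assumes "is_policy Ai m" "k \<in> Ai"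
  shows "is_policy Ai (m(s := indicator {k}))"
  using assms by (simp add: is_policy_def indicator_def of_bool_def)

lemma joint_policy_upd:
  "is_joint_policy A mu \<Longrightarrow> is_policy (A i) m \<Longrightarrow> is_joint_policy A (mu(i := m))"
  by (simp add: is_joint_policy_def)

lemma joint_policy_upd_mixp:
  assumes "is_joint_policy A mu" "is_policy (A i) m" "0 \<le> d" "d \<le> 1"
  shows "is_joint_policy A (mu(i := mixp d (mu i) m))"
  using assms by (intro joint_policy_upd policy_mixp) (auto simp: is_joint_policy_def)

lemma jprob_upd:
  fixes mu :: "'i::finite \<Rightarrow> 's \<Rightarrow> 'a \<Rightarrow> real"
  shows "jprob (mu(i := m)) s a = m s (a i) * (\<Prod>j\<in>UNIV - {i}. mu j s (a j))"
proof -
  have "jprob (mu(i := m)) s a = m s (a i) * (\<Prod>j\<in>UNIV - {i}. (mu(i := m)) j s (a j))"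
    unfolding jprob_def by (subst prod.remove[of UNIV i]) auto
  also have "(\<Prod>j\<in>UNIV - {i}. (mu(i := m)) j s (a j)) = (\<Prod>j\<in>UNIV - {i}. mu j s (a j))"
    by (rule prod.cong) auto
  finally show ?thesis .
qed

lemma jprob_upd_mixp:
  "jprob (mu(i := mixp d (mu i) m)) s a = (1 - d) * jprob mu s a + d * jprob (mu(i := m)) s a"
  using jprob_upd[of mu i "mu i" s a] by (simp add: jprob_upd mixp_def algebra_simps)

lemma jprob_upd_eq_sum_pure:
  fixes A :: "'i::finite \<Rightarrow> 'a::finite set"
  assumes "a \<in> joint_acts A"
  shows "jprob (mu(i := m)) s a = (\<Sum>k\<in>A i. m s k * jprob (mu(i := pure_policy k)) s a)"
proof -
  have "a i \<in> A i" using assms by (auto simp: joint_acts_def)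
  then show ?thesis
    by (simp add: jprob_upd indicator_def of_bool_def if_distrib if_distribR cong: if_cong)
qed

lemma jprob_nonneg: "is_joint_policy A mu \<Longrightarrow> 0 \<le> jprob mu s a"
  unfolding jprob_def is_joint_policy_def is_policy_def by (auto intro: prod_nonneg)

lemma sum_jprob:
  fixes A :: "'i::finite \<Rightarrow> 'a::finite set"
  assumes "is_joint_policy A mu"
  shows "(\<Sum>a\<in>joint_acts A. jprob mu s a) = 1"
proof -
  have "(\<Sum>a\<in>joint_acts A. jprob mu s a) = (\<Prod>i\<in>UNIV. \<Sum>y\<in>A i. mu i s y)"
    unfolding joint_acts_def jprob_def by (rule prod_sum_PiE[symmetric]) auto
  also have "\<dots> = 1" using assms by (simp add: is_joint_policy_def is_policy_def)
  finally show ?thesis .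
qed

section \<open>Average reward, bias and advantage\<close>

locale game =
  fixes A :: "'i::finite \<Rightarrow> 'a::finite set"
    and P :: "'s::finite \<Rightarrow> ('i \<Rightarrow> 'a) \<Rightarrow> 's \<Rightarrow> real"
  assumes P_nonneg: "\<forall>s a s'. a \<in> joint_acts A \<longrightarrow> 0 \<le> P s a s'"
    and P_sum: "\<forall>s a. a \<in> joint_acts A \<longrightarrow> (\<Sum>s'\<in>UNIV. P s a s') = 1"
    and erg: "\<forall>nu. is_joint_policy A nu \<longrightarrow> ergodic (chain A P nu)"
begin

lemma sum_chain_mult:
  "(\<Sum>t\<in>UNIV. chain A P nu s t * h t) = (\<Sum>a\<in>joint_acts A. jprob nu s a * (\<Sum>t\<in>UNIV. P s a t * h t))"
  unfolding chain_def by (rule sum_product_assoc[symmetric]) (auto simp: joint_acts_def)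

lemma chain_stochastic:
  assumes nu: "is_joint_policy A nu"
  shows "stochastic (chain A P nu)"
proof -
  have "(\<Sum>t\<in>UNIV. chain A P nu s t) = (\<Sum>a\<in>joint_acts A. jprob nu s a)" for s
    using sum_chain_mult[of nu s "\<lambda>_. 1"] P_sum by (simp cong: sum.cong)
  moreover have "0 \<le> chain A P nu s t" for s t
    unfolding chain_def using P_nonneg jprob_nonneg[OF nu] by (auto intro!: sum_nonneg)
  ultimately show ?thesis using sum_jprob[OF nu] by (simp add: stochastic_def)
qed

lemma stat_dist_stationary:
  assumes nu: "is_joint_policy A nu"
  shows "is_stationary_dist (chain A P nu) (stat_dist A P nu)"
proof -
  have "\<exists>!p. is_stationary_dist (chain A P nu) p"
    using stationary_dist_exists[OF chain_stochastic[OF nu]]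
      stationary_dist_unique[OF erg[rule_format, OF nu]] by blast
  then show ?thesis unfolding stat_dist_def by (rule theI')
qed

lemma stat_dist_pos: "is_joint_policy A nu \<Longrightarrow> 0 < stat_dist A P nu s"
  using stationary_dist_pos[OF erg[rule_format] stat_dist_stationary] by blast

lemma stat_dist_sum: "is_joint_policy A nu \<Longrightarrow> (\<Sum>s\<in>UNIV. stat_dist A P nu s) = 1"
  using stat_dist_stationary by (simp add: is_stationary_dist_def)

lemma stat_dist_le_1:
  assumes "is_joint_policy A nu"
  shows "stat_dist A P nu s \<le> 1"
proof -
  have "stat_dist A P nu s \<le> (\<Sum>s\<in>UNIV. stat_dist A P nu s)"
    using stat_dist_pos[OF assms] by (intro member_le_sum) (auto intro: less_imp_le)
  then show ?thesis using stat_dist_sum[OF assms] by simp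
qed

definition expected_reward :: "('s \<Rightarrow> ('i \<Rightarrow> 'a) \<Rightarrow> real) \<Rightarrow> ('i \<Rightarrow> 's \<Rightarrow> 'a \<Rightarrow> real) \<Rightarrow> 's \<Rightarrow> real"
  where "expected_reward f nu s = (\<Sum>a\<in>joint_acts A. jprob nu s a * f s a)"

definition avg_reward :: "('s \<Rightarrow> ('i \<Rightarrow> 'a) \<Rightarrow> real) \<Rightarrow> ('i \<Rightarrow> 's \<Rightarrow> 'a \<Rightarrow> real) \<Rightarrow> real"
  where "avg_reward f nu = (\<Sum>s\<in>UNIV. stat_dist A P nu s * expected_reward f nu s)"

text \<open>Any solution of the Poisson equation of \<open>mu\<close>; it is unique only up to an additive constant,
  which cancels in \<open>advantage\<close>.\<close>

definition bias :: "('s \<Rightarrow> ('i \<Rightarrow> 'a) \<Rightarrow> real) \<Rightarrow> ('i \<Rightarrow> 's \<Rightarrow> 'a \<Rightarrow> real) \<Rightarrow> 's \<Rightarrow> real"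
  where "bias f mu = (SOME g. \<forall>s.
    g s - (\<Sum>t\<in>UNIV. chain A P mu s t * g t) = expected_reward f mu s - avg_reward f mu)"

definition q_value :: "('s \<Rightarrow> ('i \<Rightarrow> 'a) \<Rightarrow> real) \<Rightarrow> ('i \<Rightarrow> 's \<Rightarrow> 'a \<Rightarrow> real) \<Rightarrow> 's \<Rightarrow> ('i \<Rightarrow> 'a) \<Rightarrow> real"
  where "q_value f mu s a = f s a + (\<Sum>t\<in>UNIV. P s a t * bias f mu t)"

definition advantage :: "('s \<Rightarrow> ('i \<Rightarrow> 'a) \<Rightarrow> real) \<Rightarrow> ('i \<Rightarrow> 's \<Rightarrow> 'a \<Rightarrow> real)
    \<Rightarrow> ('i \<Rightarrow> 's \<Rightarrow> 'a \<Rightarrow> real) \<Rightarrow> 's \<Rightarrow> real"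
  where "advantage f mu nu s =
    (\<Sum>a\<in>joint_acts A. jprob nu s a * q_value f mu s a) - bias f mu s - avg_reward f mu"

lemma eta_eq_avg_reward: "eta A P r nu = avg_reward r nu"
  by (simp add: eta_def avg_reward_def expected_reward_def)

lemma avg_reward_state_reward:
  assumes "is_joint_policy A nu"
  shows "avg_reward (\<lambda>s a. y s) nu = (\<Sum>s\<in>UNIV. stat_dist A P nu s * y s)"
  using sum_jprob[OF assms]
  by (simp add: avg_reward_def expected_reward_def sum_distrib_right[symmetric])

lemma avg_reward_affine:
  assumes nu: "is_joint_policy A nu"
  shows "avg_reward (\<lambda>s a. g s a + x * h s a + z) nu = avg_reward g nu + x * avg_reward h nu + z"
proof -
  have "expected_reward (\<lambda>s a. g s a + x * h s a + z) nu s
      = (\<Sum>a\<in>joint_acts A. jprob nu s a * g s a + x * (jprob nu s a * h s a) + z * jprob nu s a)" for s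
    unfolding expected_reward_def by (rule sum.cong) (auto simp: algebra_simps)
  also have "\<dots> s = expected_reward g nu s + x * expected_reward h nu s
      + z * (\<Sum>a\<in>joint_acts A. jprob nu s a)" for s
    unfolding expected_reward_def by (simp add: sum.distrib sum_distrib_left)
  finally have e: "expected_reward (\<lambda>s a. g s a + x * h s a + z) nu s
      = expected_reward g nu s + x * expected_reward h nu s + z" for s
    using sum_jprob[OF nu] by simp
  have "avg_reward (\<lambda>s a. g s a + x * h s a + z) nu
      = (\<Sum>s\<in>UNIV. stat_dist A P nu s * expected_reward g nu s
          + x * (stat_dist A P nu s * expected_reward h nu s) + z * stat_dist A P nu s)"
    unfolding avg_reward_def e by (rule sum.cong) (auto simp: algebra_simps)
  then show ?thesis
    using stat_dist_sum[OF nu] by (simp add: avg_reward_def sum.distrib sum_distrib_left[symmetric])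
qed

lemma bias_poisson:
  assumes mu: "is_joint_policy A mu"
  shows "bias f mu s - (\<Sum>t\<in>UNIV. chain A P mu s t * bias f mu t) = expected_reward f mu s - avg_reward f mu"
proof -
  have "\<exists>g. \<forall>s. g s - (\<Sum>t\<in>UNIV. chain A P mu s t * g t) = expected_reward f mu s - avg_reward f mu"
    unfolding avg_reward_def
    by (rule poisson_equation_solvable[OF chain_stochastic[OF mu] erg[rule_format, OF mu]
        stat_dist_stationary[OF mu]])
  then show ?thesis unfolding bias_def by (rule someI_ex[THEN spec])
qed

lemma expected_q_value:
  "(\<Sum>a\<in>joint_acts A. jprob nu s a * q_value f mu s a)
     = expected_reward f nu s + (\<Sum>t\<in>UNIV. chain A P nu s t * bias f mu t)"
  by (simp add: q_value_def expected_reward_def sum_chain_mult distrib_left sum.distrib)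

lemma advantage_self: "is_joint_policy A mu \<Longrightarrow> advantage f mu mu s = 0"
  using bias_poisson[of mu f s] by (simp add: advantage_def expected_q_value)

lemma performance_difference:
  assumes mu: "is_joint_policy A mu" and nu: "is_joint_policy A nu"
  shows "avg_reward f nu - avg_reward f mu = (\<Sum>s\<in>UNIV. stat_dist A P nu s * advantage f mu nu s)"
proof -
  let ?p = "stat_dist A P nu" and ?h = "bias f mu"
  have "(\<Sum>s\<in>UNIV. ?p s * advantage f mu nu s)
      = avg_reward f nu + (\<Sum>s\<in>UNIV. ?p s * (\<Sum>t\<in>UNIV. chain A P nu s t * ?h t))
        - (\<Sum>s\<in>UNIV. ?p s * ?h s) - (\<Sum>s\<in>UNIV. ?p s) * avg_reward f mu"
    by (simp add: advantage_def expected_q_value avg_reward_def algebra_simps sum.distrib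
        sum_subtractf sum_distrib_right)
  also have "\<dots> = avg_reward f nu - avg_reward f mu"
    by (simp add: stationary_expectation[OF stat_dist_stationary[OF nu]] stat_dist_sum[OF nu])
  finally show ?thesis by simp
qed

lemma advantage_upd_mixp:
  assumes "is_joint_policy A mu"
  shows "advantage f mu (mu(i := mixp d (mu i) m)) s = d * advantage f mu (mu(i := m)) s"
proof -
  have "(\<Sum>a\<in>joint_acts A. jprob (mu(i := mixp d (mu i) m)) s a * q_value f mu s a)
      = (1 - d) * (\<Sum>a\<in>joint_acts A. jprob mu s a * q_value f mu s a)
        + d * (\<Sum>a\<in>joint_acts A. jprob (mu(i := m)) s a * q_value f mu s a)"
    by (simp add: jprob_upd_mixp distrib_right sum.distrib sum_distrib_left mult.assoc)
  then show ?thesis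
    using advantage_self[OF assms, of f s] by (simp add: advantage_def algebra_simps)
qed

lemma advantage_upd_cong:
  "m s = m' s \<Longrightarrow> advantage f mu (mu(i := m)) s = advantage f mu (mu(i := m')) s"
  by (simp add: advantage_def jprob_upd)

lemma advantage_upd_at:
  assumes "is_joint_policy A mu"
  shows "advantage f mu (mu(i := (mu i)(s := act_dist))) t
    = (if t = s then advantage f mu (mu(i := \<lambda>_. act_dist)) s else 0)"
proof (cases "t = s")
  case True
  then show ?thesis by (simp add: advantage_upd_cong[of "(mu i)(s := act_dist)" s "\<lambda>_. act_dist"])
next
  case False
  then have "advantage f mu (mu(i := (mu i)(s := act_dist))) t = advantage f mu (mu(i := mu i)) t"
    by (intro advantage_upd_cong) simp
  with False show ?thesis using advantage_self[OF assms] by simp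
qed

lemma advantage_upd_eq_sum_pure:
  assumes m: "is_policy (A i) m"
  shows "advantage f mu (mu(i := m)) s = (\<Sum>k\<in>A i. m s k * advantage f mu (mu(i := pure_policy k)) s)"
proof -
  define Q where "Q k = (\<Sum>a\<in>joint_acts A. jprob (mu(i := pure_policy k)) s a * q_value f mu s a)" for k
  define c where "c = bias f mu s + avg_reward f mu"
  have "(\<Sum>a\<in>joint_acts A. jprob (mu(i := m)) s a * q_value f mu s a)
      = (\<Sum>a\<in>joint_acts A. \<Sum>k\<in>A i. m s k * (jprob (mu(i := pure_policy k)) s a * q_value f mu s a))"
    by (rule sum.cong[OF refl]) (simp add: jprob_upd_eq_sum_pure[where m = m] sum_distrib_right mult.assoc)
  also have "\<dots> = (\<Sum>k\<in>A i. m s k * Q k)"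
    unfolding Q_def by (subst sum.swap) (simp add: sum_distrib_left)
  finally have "advantage f mu (mu(i := m)) s = (\<Sum>k\<in>A i. m s k * Q k) - c"
    by (simp add: advantage_def c_def)
  also have "\<dots> = (\<Sum>k\<in>A i. m s k * Q k) - (\<Sum>k\<in>A i. m s k) * c"
    using m by (simp add: is_policy_def)
  also have "\<dots> = (\<Sum>k\<in>A i. m s k * (Q k - c))"
    by (simp add: right_diff_distrib sum_subtractf sum_distrib_right)
  also have "\<dots> = (\<Sum>k\<in>A i. m s k * advantage f mu (mu(i := pure_policy k)) s)"
    by (simp add: advantage_def Q_def c_def diff_diff_eq)
  finally show ?thesis .
qed

lemma avg_reward_upd_mixp:
  assumes mu: "is_joint_policy A mu" and m: "is_policy (A i) m" and d: "0 \<le> d" "d \<le> 1"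
  shows "avg_reward f (mu(i := mixp d (mu i) m)) - avg_reward f mu
     = d * (\<Sum>s\<in>UNIV. stat_dist A P (mu(i := mixp d (mu i) m)) s * advantage f mu (mu(i := m)) s)"
  by (simp add: performance_difference[OF mu joint_policy_upd_mixp[OF mu m d]] advantage_upd_mixp[OF mu]
      sum_distrib_left mult.left_commute)

text \<open>Performance difference with the indicator of \<open>s\<^sub>0\<close> as reward: the stationary
  distribution moves by \<open>O(d)\<close> along a mixture.\<close>

lemma stat_dist_upd_mixp_tendsto:
  assumes mu: "is_joint_policy A mu" and m: "is_policy (A i) m"
  shows "((\<lambda>d. stat_dist A P (mu(i := mixp d (mu i) m)) s0) \<longlongrightarrow> stat_dist A P mu s0) (at_right 0)"
proof -
  let ?adv = "advantage (\<lambda>s a. indicator {s0} s) mu (mu(i := m))"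
  define C where "C = (\<Sum>s\<in>UNIV. \<bar>?adv s\<bar>)"
  have "\<bar>stat_dist A P (mu(i := mixp d (mu i) m)) s0 - stat_dist A P mu s0\<bar> \<le> d * C"
    if d: "0 \<le> d" "d \<le> 1" for d
  proof -
    let ?nu = "mu(i := mixp d (mu i) m)"
    have nu: "is_joint_policy A ?nu" by (rule joint_policy_upd_mixp[OF mu m d])
    have "\<bar>\<Sum>s\<in>UNIV. stat_dist A P ?nu s * ?adv s\<bar> \<le> (\<Sum>s\<in>UNIV. stat_dist A P ?nu s * \<bar>?adv s\<bar>)"
      using sum_abs[of "\<lambda>s. stat_dist A P ?nu s * ?adv s" UNIV] stat_dist_pos[OF nu]
      by (simp add: abs_mult less_imp_le)
    also have "\<dots> \<le> C"
      unfolding C_def using stat_dist_pos[OF nu] stat_dist_le_1[OF nu]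
      by (intro sum_mono mult_left_le_one_le) (auto intro: less_imp_le)
    finally have "\<bar>\<Sum>s\<in>UNIV. stat_dist A P ?nu s * ?adv s\<bar> \<le> C" .
    with d show ?thesis
      using avg_reward_upd_mixp[OF mu m d, of "\<lambda>s a. indicator {s0} s"]
      by (simp add: avg_reward_state_reward[OF nu] avg_reward_state_reward[OF mu] abs_mult
          mult_left_mono)
  qed
  moreover have "eventually (\<lambda>d. d \<in> {0<..<1}) (at_right (0::real))"
    by (rule eventually_at_right_real) simp
  ultimately have "eventually (\<lambda>d. norm (stat_dist A P (mu(i := mixp d (mu i) m)) s0 - stat_dist A P mu s0)
      \<le> d * C) (at_right 0)"
    by (auto elim: eventually_mono)
  moreover have "((\<lambda>d. d * C) \<longlongrightarrow> 0) (at_right 0)"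
    by (auto intro!: tendsto_eq_intros)
  ultimately show ?thesis
    by (rule LIM_zero_cancel[OF Lim_null_comparison])
qed

section \<open>The mean-variance objective\<close>

definition pseudo_reward :: "('s \<Rightarrow> ('i \<Rightarrow> 'a) \<Rightarrow> real) \<Rightarrow> real \<Rightarrow> ('i \<Rightarrow> 's \<Rightarrow> 'a \<Rightarrow> real)
    \<Rightarrow> 's \<Rightarrow> ('i \<Rightarrow> 'a) \<Rightarrow> real"
  where "pseudo_reward r \<beta> mu s a = r s a - \<beta> * (r s a - eta A P r mu)\<^sup>2"

text \<open>The variance about the mean \<open>\<eta>\<close> is the second moment about any \<open>e\<close> minus
  \<open>(\<eta> - e)\<^sup>2\<close>.\<close>

lemma MVJ_eq_avg_reward:
  assumes nu: "is_joint_policy A nu"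
  shows "MVJ A P r \<beta> nu = avg_reward (\<lambda>s a. r s a - \<beta> * (r s a - e)\<^sup>2) nu + \<beta> * (eta A P r nu - e)\<^sup>2"
proof -
  let ?\<eta> = "eta A P r nu" and ?sq = "\<lambda>s a. (r s a - e)\<^sup>2"
  have "zeta A P r nu = avg_reward (\<lambda>s a. (r s a - ?\<eta>)\<^sup>2) nu"
    unfolding zeta_def avg_reward_def expected_reward_def ..
  also have "(\<lambda>s a. (r s a - ?\<eta>)\<^sup>2) = (\<lambda>s a. ?sq s a + (- 2 * (?\<eta> - e)) * r s a + (?\<eta>\<^sup>2 - e\<^sup>2))"
    by (auto simp: fun_eq_iff power2_eq_square algebra_simps)
  also have "avg_reward \<dots> nu = avg_reward ?sq nu + (- 2 * (?\<eta> - e)) * ?\<eta> + (?\<eta>\<^sup>2 - e\<^sup>2)"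
    by (simp only: avg_reward_affine[OF nu] eta_eq_avg_reward)
  finally have zeta: "zeta A P r nu = avg_reward ?sq nu - (?\<eta> - e)\<^sup>2"
    by (simp add: power2_eq_square algebra_simps)
  have "avg_reward (\<lambda>s a. r s a + (- \<beta>) * ?sq s a + 0) nu = ?\<eta> - \<beta> * avg_reward ?sq nu"
    by (simp only: avg_reward_affine[OF nu] eta_eq_avg_reward)
  then show ?thesis
    unfolding MVJ_def zeta by (simp add: algebra_simps)
qed

lemma MVJ_diff:
  assumes mu: "is_joint_policy A mu" and nu: "is_joint_policy A nu"
  shows "MVJ A P r \<beta> nu - MVJ A P r \<beta> mu
    = avg_reward (pseudo_reward r \<beta> mu) nu - avg_reward (pseudo_reward r \<beta> mu) mu
      + \<beta> * (eta A P r nu - eta A P r mu)\<^sup>2"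
  using MVJ_eq_avg_reward[OF nu, of r \<beta> "eta A P r mu"] MVJ_eq_avg_reward[OF mu, of r \<beta> "eta A P r mu"]
  by (simp add: pseudo_reward_def[abs_def])

lemma MVJ_upd_mixp_diff:
  assumes mu: "is_joint_policy A mu" and m: "is_policy (A i) m" and d: "0 \<le> d" "d \<le> 1"
  defines "nu \<equiv> mu(i := mixp d (mu i) m)"
  shows "MVJ A P r \<beta> nu - MVJ A P r \<beta> mu
    = d * (\<Sum>s\<in>UNIV. stat_dist A P nu s * advantage (pseudo_reward r \<beta> mu) mu (mu(i := m)) s)
      + \<beta> * (d * (\<Sum>s\<in>UNIV. stat_dist A P nu s * advantage r mu (mu(i := m)) s))\<^sup>2"
  unfolding nu_def MVJ_diff[OF mu joint_policy_upd_mixp[OF mu m d]] eta_eq_avg_reward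
    avg_reward_upd_mixp[OF mu m d] ..

lemma Dir_eq:
  assumes mu: "is_joint_policy A mu" and m: "is_policy (A i) m"
  shows "Dir A P r \<beta> mu i m
    = (\<Sum>s\<in>UNIV. stat_dist A P mu s * advantage (pseudo_reward r \<beta> mu) mu (mu(i := m)) s)"
proof -
  define F where "F d = MVJ A P r \<beta> (mu(i := mixp d (mu i) m))" for d
  define X where "X d = (\<Sum>s\<in>UNIV. stat_dist A P (mu(i := mixp d (mu i) m)) s
      * advantage (pseudo_reward r \<beta> mu) mu (mu(i := m)) s)" for d
  define Y where "Y d = (\<Sum>s\<in>UNIV. stat_dist A P (mu(i := mixp d (mu i) m)) s
      * advantage r mu (mu(i := m)) s)" for d
  have "(F d - F 0) / d = X d + \<beta> * d * (Y d)\<^sup>2" if "d \<in> {0<..<1}" for d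
    using that MVJ_upd_mixp_diff[OF mu m, of d r \<beta>]
    by (simp add: F_def X_def Y_def field_simps power2_eq_square)
  moreover have "eventually (\<lambda>d. d \<in> {0<..<1}) (at_right (0::real))"
    by (rule eventually_at_right_real) simp
  ultimately have "eventually (\<lambda>d. X d + \<beta> * d * (Y d)\<^sup>2 = (F d - F 0) / d) (at_right 0)"
    by (auto elim: eventually_mono)
  moreover have "((\<lambda>d. X d + \<beta> * d * (Y d)\<^sup>2) \<longlongrightarrow> X 0 + \<beta> * 0 * (Y 0)\<^sup>2) (at_right 0)"
  proof -
    have "((\<lambda>d. stat_dist A P (mu(i := mixp d (mu i) m)) s)
        \<longlongrightarrow> stat_dist A P (mu(i := mixp 0 (mu i) m)) s) (at_right 0)" for s
      using stat_dist_upd_mixp_tendsto[OF mu m] by simp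
    then show ?thesis unfolding X_def Y_def by (intro tendsto_intros)
  qed
  ultimately have "((\<lambda>d. (F d - F 0) / d) \<longlongrightarrow> X 0) (at_right 0)"
    by (simp add: tendsto_cong)
  then show ?thesis
    by (simp add: Dir_def rderiv0_def F_def X_def tendsto_Lim)
qed

end

section \<open>Local Nash equilibria at first-order stationary points\<close>

locale mv_stationary_point = game A P
  for A :: "'i::finite \<Rightarrow> 'a::finite set" and P :: "'s::finite \<Rightarrow> ('i \<Rightarrow> 'a) \<Rightarrow> 's \<Rightarrow> real" +
  fixes r :: "'s \<Rightarrow> ('i \<Rightarrow> 'a) \<Rightarrow> real" and \<beta> :: real and mu :: "'i \<Rightarrow> 's \<Rightarrow> 'a \<Rightarrow> real"
  assumes beta: "0 \<le> \<beta>" and pol: "is_joint_policy A mu"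
    and fos: "first_order_stationary A P r \<beta> mu"
begin

abbreviation J_advantage :: "'i \<Rightarrow> ('s \<Rightarrow> 'a \<Rightarrow> real) \<Rightarrow> 's \<Rightarrow> real" where
  "J_advantage i m \<equiv> advantage (pseudo_reward r \<beta> mu) mu (mu(i := m))"

abbreviation eta_advantage :: "'i \<Rightarrow> ('s \<Rightarrow> 'a \<Rightarrow> real) \<Rightarrow> 's \<Rightarrow> real" where
  "eta_advantage i m \<equiv> advantage r mu (mu(i := m))"

lemma policy_mu: "is_policy (A i) (mu i)"
  using pol by (simp add: is_joint_policy_def)

lemma Dir_deviation:
  assumes "k \<in> A i"
  shows "Dir A P r \<beta> mu i ((mu i)(s := indicator {k})) = stat_dist A P mu s * J_advantage i (pure_policy k) s"
  by (simp add: Dir_eq[OF pol policy_upd_pure[OF policy_mu assms]] advantage_upd_at[OF pol]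
      if_distrib cong: if_cong)

lemma J_advantage_pure_nonpos:
  assumes "k \<in> A i"
  shows "J_advantage i (pure_policy k) s \<le> 0"
proof -
  have "Dir A P r \<beta> mu i ((mu i)(s := indicator {k})) \<le> 0"
    using fos policy_upd_pure[OF policy_mu assms] by (simp add: first_order_stationary_def)
  then show ?thesis
    using stat_dist_pos[OF pol, of s] by (simp add: Dir_deviation[OF assms] mult_le_0_iff)
qed

lemma J_advantage_nonpos:
  assumes m: "is_policy (A i) m"
  shows "J_advantage i m s \<le> 0"
  unfolding advantage_upd_eq_sum_pure[OF m] using m J_advantage_pure_nonpos
  by (intro sum_nonpos mult_nonneg_nonpos) (auto simp: is_policy_def)

lemma Dir_eq_0_iff:
  assumes m: "is_policy (A i) m"
  shows "Dir A P r \<beta> mu i m = 0 \<longleftrightarrow> (\<forall>s. J_advantage i m s = 0)"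
proof -
  have "Dir A P r \<beta> mu i m = - (\<Sum>s\<in>UNIV. stat_dist A P mu s * - J_advantage i m s)"
    by (simp add: Dir_eq[OF pol m] sum_negf)
  moreover have "0 \<le> stat_dist A P mu s * - J_advantage i m s" for s
    using stat_dist_pos[OF pol, of s] J_advantage_nonpos[OF m, of s] by (simp add: mult_le_0_iff)
  ultimately show ?thesis
    using stat_dist_pos[OF pol] by (simp add: sum_nonneg_eq_0_iff less_imp_neq[symmetric])
qed

lemma eta_deviation_mixp:
  fixes s :: 's
  assumes k: "k \<in> A i" and d: "0 \<le> d" "d \<le> 1"
  defines "nu \<equiv> mu(i := mixp d (mu i) ((mu i)(s := indicator {k})))"
  shows "eta A P r nu - eta A P r mu = d * (stat_dist A P nu s * eta_advantage i (pure_policy k) s)"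
  unfolding nu_def eta_eq_avg_reward avg_reward_upd_mixp[OF pol policy_upd_pure[OF policy_mu k] d]
  by (simp add: advantage_upd_at[OF pol] if_distrib cong: if_cong)

lemma eta_advantage_pure_self:
  assumes "mu i s = indicator {k}"
  shows "eta_advantage i (pure_policy k) s = 0"
  using advantage_upd_cong[of "pure_policy k" s "mu i" r mu i] assms advantage_self[OF pol] by simp

definition critical_deviations_eta_neutral :: bool where
  "critical_deviations_eta_neutral \<longleftrightarrow>
    (\<forall>i s. \<forall>k\<in>A i. J_advantage i (pure_policy k) s = 0 \<longrightarrow> eta_advantage i (pure_policy k) s = 0)"

lemma policy_advantage_bounds:
  assumes m: "is_policy (A i) m"
    and K: "\<forall>s. \<forall>k\<in>A i. \<bar>eta_advantage i (pure_policy k) s\<bar> \<le> K * - J_advantage i (pure_policy k) s"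
    and M: "\<forall>s. \<forall>k\<in>A i. - J_advantage i (pure_policy k) s \<le> M"
  shows "- J_advantage i m s \<le> M" "\<bar>eta_advantage i m s\<bar> \<le> K * - J_advantage i m s"
proof -
  have w: "\<forall>k\<in>A i. 0 \<le> m s k" "sum (m s) (A i) = 1" using m by (auto simp: is_policy_def)
  have eq: "- J_advantage i m s = (\<Sum>k\<in>A i. m s k * - J_advantage i (pure_policy k) s)"
    by (simp add: advantage_upd_eq_sum_pure[OF m] sum_negf)
  show "- J_advantage i m s \<le> M"
    unfolding eq by (rule weighted_sum_le_bound[OF w]) (use M in blast)
  show "\<bar>eta_advantage i m s\<bar> \<le> K * - J_advantage i m s"
    unfolding eq advantage_upd_eq_sum_pure[OF m, of r]
    by (rule weighted_sum_abs_le[OF w(1)]) (use K in blast)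
qed

lemma pure_advantage_bounds:
  assumes crit: "\<forall>s. \<forall>k\<in>A i. J_advantage i (pure_policy k) s = 0 \<longrightarrow> eta_advantage i (pure_policy k) s = 0"
  obtains K M
  where "\<forall>s. \<forall>k\<in>A i. \<bar>eta_advantage i (pure_policy k) s\<bar> \<le> K * - J_advantage i (pure_policy k) s"
    and "\<forall>s. \<forall>k\<in>A i. - J_advantage i (pure_policy k) s \<le> M"
proof -
  define g where "g x = - J_advantage i (pure_policy (snd x)) (fst x)" for x
  define f where "f x = eta_advantage i (pure_policy (snd x)) (fst x)" for x
  have g_nonneg: "\<forall>x\<in>UNIV \<times> A i. 0 \<le> g x"
    unfolding g_def using J_advantage_pure_nonpos by (auto simp: mem_Times_iff)
  have "\<forall>x\<in>UNIV \<times> A i. g x = 0 \<longrightarrow> f x = 0"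
    unfolding f_def g_def using crit by (auto simp: mem_Times_iff)
  then have "\<exists>K\<ge>0. \<forall>x\<in>UNIV \<times> A i. \<bar>f x\<bar> \<le> K * g x"
    by (intro finite_ratio_bound[OF _ g_nonneg]) simp_all
  then obtain K where K: "\<forall>x\<in>UNIV \<times> A i. \<bar>f x\<bar> \<le> K * g x" by blast
  have M: "\<forall>x\<in>UNIV \<times> A i. g x \<le> sum g (UNIV \<times> A i)"
    using g_nonneg by (intro ballI member_le_sum) auto
  show ?thesis
  proof (rule that; intro allI ballI)
    fix s :: 's and k assume "k \<in> A i"
    then have sk: "(s, k) \<in> UNIV \<times> A i" by simp
    show "\<bar>eta_advantage i (pure_policy k) s\<bar> \<le> K * - J_advantage i (pure_policy k) s"
      using K[rule_format, OF sk] by (simp add: f_def g_def)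
    show "- J_advantage i (pure_policy k) s \<le> sum g (UNIV \<times> A i)"
      using M[rule_format, OF sk] by (simp add: g_def)
  qed
qed

lemma MVJ_upd_mixp_descent:
  assumes m: "is_policy (A i) m" and d: "0 < d" "d \<le> 1"
    and bounds: "\<forall>s. - J_advantage i m s \<le> M \<and> \<bar>eta_advantage i m s\<bar> \<le> K * - J_advantage i m s"
    and small: "d * \<beta> * K\<^sup>2 * M < 1"
  defines "nu \<equiv> mu(i := mixp d (mu i) m)"
  shows "MVJ A P r \<beta> nu \<le> MVJ A P r \<beta> mu"
    and "(\<exists>s. J_advantage i m s \<noteq> 0) \<Longrightarrow> MVJ A P r \<beta> nu < MVJ A P r \<beta> mu"
proof -
  have nu: "is_joint_policy A nu" unfolding nu_def using joint_policy_upd_mixp[OF pol m] d by simp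
  let ?p = "stat_dist A P nu"
  define X where "X = (\<Sum>s\<in>UNIV. ?p s * - J_advantage i m s)"
  define Y where "Y = (\<Sum>s\<in>UNIV. ?p s * eta_advantage i m s)"
  have p: "\<forall>s\<in>UNIV. 0 \<le> ?p s" "sum ?p UNIV = 1"
    using stat_dist_pos[OF nu] stat_dist_sum[OF nu] by (auto intro: less_imp_le)
  have J_nonneg: "0 \<le> - J_advantage i m s" for s using J_advantage_nonpos[OF m] by simp
  have "0 \<le> X"
    unfolding X_def using p J_nonneg by (intro sum_nonneg mult_nonneg_nonneg) auto
  moreover have "X \<le> M"
    unfolding X_def by (rule weighted_sum_le_bound[OF p]) (use bounds in blast)
  ultimately have X: "0 \<le> X" "X \<le> M" by auto
  have Y: "\<bar>Y\<bar> \<le> K * X"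
    unfolding X_def Y_def using bounds by (intro weighted_sum_abs_le) (use p in auto)
  have diff: "MVJ A P r \<beta> nu - MVJ A P r \<beta> mu = - (d * X) + \<beta> * (d * Y)\<^sup>2"
    using MVJ_upd_mixp_diff[OF pol m, of d r \<beta>] d by (simp add: nu_def X_def Y_def sum_negf)
  show "MVJ A P r \<beta> nu \<le> MVJ A P r \<beta> mu"
    using quadratic_perturbation_nonpos(1)[OF d(1) beta X Y small] diff by linarith
  assume "\<exists>s. J_advantage i m s \<noteq> 0"
  then obtain s where "J_advantage i m s \<noteq> 0" by blast
  then have "0 < ?p s * - J_advantage i m s"
    using stat_dist_pos[OF nu, of s] J_advantage_nonpos[OF m, of s] by (simp add: mult_pos_neg)
  then have "0 < X"
    unfolding X_def using p J_nonneg by (intro sum_pos2[of UNIV s]) (auto simp: mult_le_0_iff)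
  then show "MVJ A P r \<beta> nu < MVJ A P r \<beta> mu"
    using quadratic_perturbation_nonpos(2)[OF d(1) beta X Y small] diff by linarith
qed

lemma uniform_descent:
  assumes crit: "critical_deviations_eta_neutral"
  shows "eventually (\<lambda>d. \<forall>i m. is_policy (A i) m \<longrightarrow>
      MVJ A P r \<beta> (mu(i := mixp d (mu i) m)) \<le> MVJ A P r \<beta> mu \<and>
      ((\<exists>s. J_advantage i m s \<noteq> 0) \<longrightarrow> MVJ A P r \<beta> (mu(i := mixp d (mu i) m)) < MVJ A P r \<beta> mu))
    (at_right 0)"
proof (rule eventually_all_finite)
  fix i
  obtain K M
    where K: "\<forall>s. \<forall>k\<in>A i. \<bar>eta_advantage i (pure_policy k) s\<bar> \<le> K * - J_advantage i (pure_policy k) s"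
      and M: "\<forall>s. \<forall>k\<in>A i. - J_advantage i (pure_policy k) s \<le> M"
    using pure_advantage_bounds crit unfolding critical_deviations_eta_neutral_def by blast
  have "((\<lambda>d. d * \<beta> * K\<^sup>2 * M) \<longlongrightarrow> 0) (at_right 0)"
    by (auto intro!: tendsto_eq_intros)
  then have "eventually (\<lambda>d. d * \<beta> * K\<^sup>2 * M < 1) (at_right 0)"
    by (rule order_tendstoD) simp
  moreover have "eventually (\<lambda>d. d \<in> {0<..<1}) (at_right (0::real))"
    by (rule eventually_at_right_real) simp
  ultimately show "eventually (\<lambda>d. \<forall>m. is_policy (A i) m \<longrightarrow>
      MVJ A P r \<beta> (mu(i := mixp d (mu i) m)) \<le> MVJ A P r \<beta> mu \<and>
      ((\<exists>s. J_advantage i m s \<noteq> 0) \<longrightarrow> MVJ A P r \<beta> (mu(i := mixp d (mu i) m)) < MVJ A P r \<beta> mu))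
    (at_right 0)"
  proof eventually_elim
    case (elim d)
    show ?case
    proof (intro allI impI conjI)
      fix m :: "'s \<Rightarrow> 'a \<Rightarrow> real" assume m: "is_policy (A i) m"
      have "\<forall>s. - J_advantage i m s \<le> M \<and> \<bar>eta_advantage i m s\<bar> \<le> K * - J_advantage i m s"
        using policy_advantage_bounds[OF m K M] by blast
      note descent = MVJ_upd_mixp_descent[OF m _ _ this elim(1)]
      show "MVJ A P r \<beta> (mu(i := mixp d (mu i) m)) \<le> MVJ A P r \<beta> mu"
        using descent(1) elim by simp
      show "MVJ A P r \<beta> (mu(i := mixp d (mu i) m)) < MVJ A P r \<beta> mu"
        if "\<exists>s. J_advantage i m s \<noteq> 0"
        using descent(2) elim that by simp
    qed
  qed
qed

lemma critical_deviations_eta_neutral_if_Dir_neg: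
  assumes "\<forall>i m. is_policy (A i) m \<and> m \<noteq> mu i \<longrightarrow> Dir A P r \<beta> mu i m < 0"
  shows "critical_deviations_eta_neutral"
  unfolding critical_deviations_eta_neutral_def
proof (intro allI ballI impI)
  fix i s k assume k: "k \<in> A i" and "J_advantage i (pure_policy k) s = 0"
  then have D0: "Dir A P r \<beta> mu i ((mu i)(s := indicator {k})) = 0" by (simp add: Dir_deviation)
  have "(mu i)(s := indicator {k}) = mu i"
  proof (rule ccontr)
    assume "(mu i)(s := indicator {k}) \<noteq> mu i"
    then have "Dir A P r \<beta> mu i ((mu i)(s := indicator {k})) < 0"
      using assms policy_upd_pure[OF policy_mu k] by blast
    with D0 show False by simp
  qed
  then show "eta_advantage i (pure_policy k) s = 0"
    by (intro eta_advantage_pure_self) (drule fun_cong[of _ _ s], simp)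
qed

lemma critical_deviations_eta_neutral_if_eta_locally_const:
  assumes "\<forall>i m. is_policy (A i) m \<and> m \<noteq> mu i \<and> Dir A P r \<beta> mu i m = 0 \<longrightarrow>
      (\<exists>db. 0 < db \<and> db \<le> 1 \<and> (\<forall>d. 0 < d \<and> d \<le> db \<longrightarrow>
         eta A P r (mu(i := mixp d (mu i) m)) = eta A P r mu))"
  shows "critical_deviations_eta_neutral"
  unfolding critical_deviations_eta_neutral_def
proof (intro allI ballI impI)
  fix i s k assume k: "k \<in> A i" and J0: "J_advantage i (pure_policy k) s = 0"
  let ?m = "(mu i)(s := indicator {k})"
  show "eta_advantage i (pure_policy k) s = 0"
  proof (cases "?m = mu i")
    case True
    then show ?thesis by (intro eta_advantage_pure_self) (drule fun_cong[of _ _ s], simp)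
  next
    case False
    have "Dir A P r \<beta> mu i ?m = 0" using J0 k by (simp add: Dir_deviation)
    then obtain db where db: "0 < db" "db \<le> 1"
      and "eta A P r (mu(i := mixp db (mu i) ?m)) = eta A P r mu"
      using assms policy_upd_pure[OF policy_mu k] False by blast
    then have "db * (stat_dist A P (mu(i := mixp db (mu i) ?m)) s * eta_advantage i (pure_policy k) s) = 0"
      using eta_deviation_mixp[OF k, where d = db and s = s] by simp
    moreover have "0 < stat_dist A P (mu(i := mixp db (mu i) ?m)) s"
      using db by (intro stat_dist_pos joint_policy_upd_mixp[OF pol policy_upd_pure[OF policy_mu k]]) auto
    ultimately show ?thesis using db by simp
  qed
qed

lemma eta_locally_const_if_local_NE:
  assumes NE: "local_NE A P r \<beta> mu" and m: "is_policy (A i) m" and D0: "Dir A P r \<beta> mu i m = 0"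
  shows "eventually (\<lambda>d. eta A P r (mu(i := mixp d (mu i) m)) = eta A P r mu) (at_right 0)"
proof -
  have "eventually (\<lambda>d. MVJ A P r \<beta> (mu(i := mixp d (mu i) m)) \<le> MVJ A P r \<beta> mu) (at_right 0)"
    using NE m unfolding local_NE_def eventually_at_right_0_iff by blast
  moreover have "eventually (\<lambda>d. d \<in> {0<..<1}) (at_right (0::real))"
    by (rule eventually_at_right_real) simp
  ultimately show ?thesis
  proof eventually_elim
    case (elim d)
    let ?nu = "mu(i := mixp d (mu i) m)"
    have nu: "is_joint_policy A ?nu" using joint_policy_upd_mixp[OF pol m] elim(2) by simp
    have J0: "\<forall>s. J_advantage i m s = 0" using D0 Dir_eq_0_iff[OF m] by blast
    then have w: "avg_reward (pseudo_reward r \<beta> mu) ?nu = avg_reward (pseudo_reward r \<beta> mu) mu"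
      using avg_reward_upd_mixp[OF pol m, of d "pseudo_reward r \<beta> mu"] elim(2) by simp
    show ?case
    proof (cases "\<beta> = 0")
      case True
      then have "pseudo_reward r \<beta> mu = r" by (simp add: pseudo_reward_def[abs_def])
      then show ?thesis using w by (simp add: eta_eq_avg_reward)
    next
      case False
      then have "0 < \<beta>" using beta by simp
      moreover have "\<beta> * (eta A P r ?nu - eta A P r mu)\<^sup>2 \<le> 0"
        using elim(1) MVJ_diff[OF pol nu, of r \<beta>] w by simp
      ultimately show ?thesis by (simp add: mult_le_0_iff)
    qed
  qed
qed

lemma strict_local_NE_if_Dir_neg:
  assumes Dir_neg: "\<forall>i m. is_policy (A i) m \<and> m \<noteq> mu i \<longrightarrow> Dir A P r \<beta> mu i m < 0"
  shows "strict_local_NE A P r \<beta> mu"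
proof -
  have "eventually (\<lambda>d. \<forall>i m. is_policy (A i) m \<longrightarrow>
      MVJ A P r \<beta> mu \<ge> MVJ A P r \<beta> (mu(i := mixp d (mu i) m)) \<and>
      (m \<noteq> mu i \<longrightarrow> MVJ A P r \<beta> mu > MVJ A P r \<beta> (mu(i := mixp d (mu i) m)))) (at_right 0)"
    using uniform_descent[OF critical_deviations_eta_neutral_if_Dir_neg[OF Dir_neg]]
  proof (rule eventually_mono, intro allI impI conjI)
    fix d :: real and i and m :: "'s \<Rightarrow> 'a \<Rightarrow> real"
    assume descent: "\<forall>i m. is_policy (A i) m \<longrightarrow>
      MVJ A P r \<beta> (mu(i := mixp d (mu i) m)) \<le> MVJ A P r \<beta> mu \<and>
      ((\<exists>s. J_advantage i m s \<noteq> 0) \<longrightarrow> MVJ A P r \<beta> (mu(i := mixp d (mu i) m)) < MVJ A P r \<beta> mu)"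
      and m: "is_policy (A i) m"
    then show "MVJ A P r \<beta> mu \<ge> MVJ A P r \<beta> (mu(i := mixp d (mu i) m))" by blast
    assume "m \<noteq> mu i"
    then have "\<exists>s. J_advantage i m s \<noteq> 0"
      using Dir_neg m Dir_eq_0_iff[OF m] by force
    then show "MVJ A P r \<beta> mu > MVJ A P r \<beta> (mu(i := mixp d (mu i) m))" using descent m by blast
  qed
  then show ?thesis unfolding strict_local_NE_def eventually_at_right_0_iff .
qed

lemma local_NE_iff_eta_locally_const:
  "local_NE A P r \<beta> mu \<longleftrightarrow>
    (\<forall>i m. is_policy (A i) m \<and> m \<noteq> mu i \<and> Dir A P r \<beta> mu i m = 0 \<longrightarrow>
      (\<exists>db. 0 < db \<and> db \<le> 1 \<and> (\<forall>d. 0 < d \<and> d \<le> db \<longrightarrow>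
         eta A P r (mu(i := mixp d (mu i) m)) = eta A P r mu)))"
proof
  assume "local_NE A P r \<beta> mu"
  then show "\<forall>i m. is_policy (A i) m \<and> m \<noteq> mu i \<and> Dir A P r \<beta> mu i m = 0 \<longrightarrow>
      (\<exists>db. 0 < db \<and> db \<le> 1 \<and> (\<forall>d. 0 < d \<and> d \<le> db \<longrightarrow>
         eta A P r (mu(i := mixp d (mu i) m)) = eta A P r mu))"
    using eta_locally_const_if_local_NE unfolding eventually_at_right_0_iff by blast
next
  assume "\<forall>i m. is_policy (A i) m \<and> m \<noteq> mu i \<and> Dir A P r \<beta> mu i m = 0 \<longrightarrow>
      (\<exists>db. 0 < db \<and> db \<le> 1 \<and> (\<forall>d. 0 < d \<and> d \<le> db \<longrightarrow>
         eta A P r (mu(i := mixp d (mu i) m)) = eta A P r mu))"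
  from uniform_descent[OF critical_deviations_eta_neutral_if_eta_locally_const[OF this]]
  have "eventually (\<lambda>d. \<forall>i m. is_policy (A i) m \<longrightarrow>
      MVJ A P r \<beta> mu \<ge> MVJ A P r \<beta> (mu(i := mixp d (mu i) m))) (at_right 0)"
    by (rule eventually_mono) blast
  then show "local_NE A P r \<beta> mu" unfolding local_NE_def eventually_at_right_0_iff .
qed

end

theorem theorem3:
  fixes A :: "'i::finite \<Rightarrow> 'a::finite set"
    and P :: "'s::finite \<Rightarrow> ('i \<Rightarrow> 'a) \<Rightarrow> 's \<Rightarrow> real"
    and r :: "'s \<Rightarrow> ('i \<Rightarrow> 'a) \<Rightarrow> real"
    and \<beta> :: real
    and mu :: "'i \<Rightarrow> 's \<Rightarrow> 'a \<Rightarrow> real"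
  assumes A_ne: "\<forall>i. A i \<noteq> {}"
    and P_nonneg: "\<forall>s a s'. a \<in> joint_acts A \<longrightarrow> 0 \<le> P s a s'"
    and P_sum: "\<forall>s a. a \<in> joint_acts A \<longrightarrow> (\<Sum>s'\<in>UNIV. P s a s') = 1"
    and erg: "\<forall>nu. is_joint_policy A nu \<longrightarrow> ergodic (chain A P nu)"
    and beta: "0 \<le> \<beta>"
    and pol: "is_joint_policy A mu"
    and fos: "first_order_stationary A P r \<beta> mu"
  shows "((\<forall>i m. is_policy (A i) m \<and> m \<noteq> mu i \<longrightarrow> Dir A P r \<beta> mu i m < 0)
            \<longrightarrow> strict_local_NE A P r \<beta> mu)
       \<and> ((\<exists>i m. is_policy (A i) m \<and> m \<noteq> mu i \<and> Dir A P r \<beta> mu i m = 0)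
            \<longrightarrow> (local_NE A P r \<beta> mu \<longleftrightarrow>
                 (\<forall>i m. is_policy (A i) m \<and> m \<noteq> mu i \<and> Dir A P r \<beta> mu i m = 0 \<longrightarrow>
                    (\<exists>db. 0 < db \<and> db \<le> 1 \<and> (\<forall>d. 0 < d \<and> d \<le> db \<longrightarrow>
                       eta A P r (mu(i := mixp d (mu i) m)) = eta A P r mu)))))"
proof -
  interpret mv_stationary_point A P r \<beta> mu
    using P_nonneg P_sum erg beta pol fos by unfold_locales
  show ?thesis
    using strict_local_NE_if_Dir_neg local_NE_iff_eta_locally_const by blast
qed

end
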